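(* Let $W$ be a right-angled Coxeter group with simple generators $S$, and let $x_1,x_2,y_1,y_2\in W$ form a butterfly. If $q\in D_L(y_1)\cap D_L(y_2)$, then $q\in D_L(x_1)\cap D_L(x_2)$.
   Context: $W$ is right-angled: every two distinct simple generators either commute or generate an infinite dihedral group. $\ell$ is length, $D_L(x)=\{q\in S:\ell(qx)<\ell(x)\}$, $\le$ Bruhat order and $\lessdot$ its covers. Elements $x_1,x_2,y_1,y_2$ with $x_1\ne x_2$, $y_1\ne y_2$ form a butterfly if $x_a\lessdot y_b$ for all $a,b\in\{1,2\}$. *)

theory Defs
  imports Main
begin

text \<open>Right-angled Coxeter system given by generator set S and a symmetric,
irreflexive commutation relation E on S: for distinct s,t in S, m(s,t)=2 if E s t,
otherwise m(s,t)=infinity.  Elements of W are represented by words over S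
(lists S); two words represent the same element iff they are related by the
congruence generated by the defining relations ss = 1 and st = ts (E s t).\<close>

definition right_angled :: "'a set \<Rightarrow> ('a \<Rightarrow> 'a \<Rightarrow> bool) \<Rightarrow> bool" where
  "right_angled S E \<longleftrightarrow> (\<forall>s t. E s t \<longrightarrow> s \<in> S \<and> t \<in> S \<and> s \<noteq> t \<and> E t s)"

definition rel_step :: "'a set \<Rightarrow> ('a \<Rightarrow> 'a \<Rightarrow> bool) \<Rightarrow> 'a list \<Rightarrow> 'a list \<Rightarrow> bool" where
  "rel_step S E u v \<longleftrightarrow>
     (\<exists>a b s. s \<in> S \<and> u = a @ [s, s] @ b \<and> v = a @ b) \<or>
     (\<exists>a b s t. s \<in> S \<and> t \<in> S \<and> E s t \<and> u = a @ [s, t] @ b \<and> v = a @ [t, s] @ b)"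

definition weq :: "'a set \<Rightarrow> ('a \<Rightarrow> 'a \<Rightarrow> bool) \<Rightarrow> 'a list \<Rightarrow> 'a list \<Rightarrow> bool" where
  "weq S E = equivclp (rel_step S E)"

definition len :: "'a set \<Rightarrow> ('a \<Rightarrow> 'a \<Rightarrow> bool) \<Rightarrow> 'a list \<Rightarrow> nat" where
  "len S E w = (LEAST n. \<exists>u \<in> lists S. weq S E u w \<and> length u = n)"

definition reflection :: "'a set \<Rightarrow> 'a list \<Rightarrow> bool" where
  "reflection S t \<longleftrightarrow> (\<exists>u \<in> lists S. \<exists>s \<in> S. t = u @ [s] @ rev u)"

definition bruhat_step :: "'a set \<Rightarrow> ('a \<Rightarrow> 'a \<Rightarrow> bool) \<Rightarrow> 'a list \<Rightarrow> 'a list \<Rightarrow> bool" where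
  "bruhat_step S E x y \<longleftrightarrow> x \<in> lists S \<and> y \<in> lists S \<and>
     (\<exists>t. reflection S t \<and> weq S E (x @ t) y) \<and> len S E x < len S E y"

definition bruhat_le :: "'a set \<Rightarrow> ('a \<Rightarrow> 'a \<Rightarrow> bool) \<Rightarrow> 'a list \<Rightarrow> 'a list \<Rightarrow> bool" where
  "bruhat_le S E x y \<longleftrightarrow> weq S E x y \<or> (bruhat_step S E)\<^sup>+\<^sup>+ x y"

definition bruhat_less :: "'a set \<Rightarrow> ('a \<Rightarrow> 'a \<Rightarrow> bool) \<Rightarrow> 'a list \<Rightarrow> 'a list \<Rightarrow> bool" where
  "bruhat_less S E x y \<longleftrightarrow> bruhat_le S E x y \<and> \<not> weq S E x y"

definition bruhat_cover :: "'a set \<Rightarrow> ('a \<Rightarrow> 'a \<Rightarrow> bool) \<Rightarrow> 'a list \<Rightarrow> 'a list \<Rightarrow> bool" where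
  "bruhat_cover S E x y \<longleftrightarrow> bruhat_less S E x y \<and>
     \<not> (\<exists>z \<in> lists S. bruhat_less S E x z \<and> bruhat_less S E z y)"

definition left_descents :: "'a set \<Rightarrow> ('a \<Rightarrow> 'a \<Rightarrow> bool) \<Rightarrow> 'a list \<Rightarrow> 'a set" where
  "left_descents S E x = {q \<in> S. len S E (q # x) < len S E x}"

definition butterfly :: "'a set \<Rightarrow> ('a \<Rightarrow> 'a \<Rightarrow> bool) \<Rightarrow> 'a list \<Rightarrow> 'a list \<Rightarrow> 'a list \<Rightarrow> 'a list \<Rightarrow> bool" where
  "butterfly S E x1 x2 y1 y2 \<longleftrightarrow>
     x1 \<in> lists S \<and> x2 \<in> lists S \<and> y1 \<in> lists S \<and> y2 \<in> lists S \<and>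
     \<not> weq S E x1 x2 \<and> \<not> weq S E y1 y2 \<and>
     bruhat_cover S E x1 y1 \<and> bruhat_cover S E x1 y2 \<and>
     bruhat_cover S E x2 y1 \<and> bruhat_cover S E x2 y2"

end

theory Submission
  imports Defs
begin

text \<open>
  The main tool is the strong exchange property, obtained from the reflection cocycle
  \<open>reflection_parity\<close>: it is invariant under the Coxeter relations, it is odd exactly when
  \<open>l(tw) < l(w)\<close>, and in that case \<open>t\<close> deletes a letter from every word for \<open>w\<close>.
  Exchange yields the lifting property: if \<open>x \<le> y\<close> and \<open>q \<in> D\<^sub>L(y)\<close>, then \<open>qx \<le> y\<close>.
  Now let \<open>y\<^sub>1 \<noteq> y\<^sub>2\<close> both cover \<open>x\<close> and have the left descent \<open>q\<close>. If \<open>q\<close> were not a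
  left descent of \<open>x\<close>, then \<open>x < qx \<le> y\<^sub>i\<close>, hence \<open>qx = y\<^sub>i\<close> for both \<open>i\<close>, which is
  impossible.
\<close>

section \<open>Words modulo the Coxeter relations\<close>

lemma weq_refl [simp]: "weq S E x x"
  by (simp add: weq_def)

lemma weq_sym: "weq S E x y \<Longrightarrow> weq S E y x"
  unfolding weq_def by (rule equivclp_sym)

lemma weq_trans [trans]: "weq S E x y \<Longrightarrow> weq S E y z \<Longrightarrow> weq S E x z"
  unfolding weq_def by (rule equivclp_trans)

lemma weq_map:
  assumes "\<And>u v. rel_step S E u v \<Longrightarrow> weq S E (f u) (f v)" and "weq S E u v"
  shows "weq S E (f u) (f v)"
  using assms(2) unfolding weq_def
proof (induction rule: equivclp_induct)
  case (step y z)
  then show ?case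
    using assms(1) unfolding weq_def by (meson equivclp_sym equivclp_trans)
qed simp

lemma rel_step_in_context:
  assumes "rel_step S E u v" shows "rel_step S E (c @ u @ d) (c @ v @ d)"
  using assms[unfolded rel_step_def]
proof (elim disjE exE conjE)
  fix a b s assume "s \<in> S" "u = a @ [s, s] @ b" "v = a @ b"
  then have "s \<in> S \<and> c @ u @ d = (c @ a) @ [s, s] @ (b @ d) \<and> c @ v @ d = (c @ a) @ (b @ d)"
    by simp
  then show ?thesis
    unfolding rel_step_def by blast
next
  fix a b s t assume "s \<in> S" "t \<in> S" "E s t" "u = a @ [s, t] @ b" "v = a @ [t, s] @ b"
  then have "s \<in> S \<and> t \<in> S \<and> E s t \<and> c @ u @ d = (c @ a) @ [s, t] @ (b @ d) \<and>
      c @ v @ d = (c @ a) @ [t, s] @ (b @ d)"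
    by simp
  then show ?thesis
    unfolding rel_step_def by blast
qed

lemma rel_step_rev:
  assumes "rel_step S E u v" shows "rel_step S E (rev u) (rev v) \<or> rel_step S E (rev v) (rev u)"
  using assms[unfolded rel_step_def]
proof (elim disjE exE conjE)
  fix a b s assume "s \<in> S" "u = a @ [s, s] @ b" "v = a @ b"
  then have "s \<in> S \<and> rev u = rev b @ [s, s] @ rev a \<and> rev v = rev b @ rev a"
    by simp
  then show ?thesis
    unfolding rel_step_def by blast
next
  fix a b s t assume "s \<in> S" "t \<in> S" "E s t" "u = a @ [s, t] @ b" "v = a @ [t, s] @ b"
  then have "s \<in> S \<and> t \<in> S \<and> E s t \<and>
      rev v = rev b @ [s, t] @ rev a \<and> rev u = rev b @ [t, s] @ rev a"
    by simp
  then show ?thesis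
    unfolding rel_step_def by blast
qed

lemma weq_in_context: "weq S E u v \<Longrightarrow> weq S E (c @ u @ d) (c @ v @ d)"
  by (rule weq_map[where f = "\<lambda>w. c @ w @ d"]) (auto simp: weq_def dest: rel_step_in_context)

lemma weq_rev: "weq S E u v \<Longrightarrow> weq S E (rev u) (rev v)"
  by (rule weq_map[where f = rev]) (auto simp: weq_def dest: rel_step_rev)

lemma weq_append: "weq S E u v \<Longrightarrow> weq S E u' v' \<Longrightarrow> weq S E (u @ u') (v @ v')"
  using weq_in_context[of S E u v "[]" u'] weq_in_context[of S E u' v' v "[]"] weq_trans
  by fastforce

lemma weq_Cons: "weq S E u v \<Longrightarrow> weq S E (s # u) (s # v)"
  using weq_in_context[of S E u v "[s]" "[]"] by simp

lemma weq_lists: "weq S E u v \<Longrightarrow> u \<in> lists S \<Longrightarrow> v \<in> lists S"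
  unfolding weq_def by (induction rule: equivclp_induct) (auto simp: rel_step_def)

lemma weq_cancel: "s \<in> S \<Longrightarrow> weq S E (c @ [s, s] @ d) (c @ d)"
  unfolding weq_def by (rule r_into_equivclp) (auto simp: rel_step_def)

lemma weq_Cons_Cons_cancel: "s \<in> S \<Longrightarrow> weq S E (s # s # d) d"
  using weq_cancel[of s S E "[]" d] by simp

lemma weq_commute: "s \<in> S \<Longrightarrow> t \<in> S \<Longrightarrow> E s t \<Longrightarrow> weq S E (c @ [s, t] @ d) (c @ [t, s] @ d)"
  unfolding weq_def rel_step_def by (rule r_into_equivclp) blast

lemma weq_append_rev_cancel: "u \<in> lists S \<Longrightarrow> weq S E (u @ rev u @ d) d"
proof (induction u arbitrary: d rule: rev_induct)
  case (snoc s u)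
  have "weq S E (u @ [s, s] @ rev u @ d) (u @ rev u @ d)"
    using snoc.prems weq_cancel[of s S E u "rev u @ d"] by simp
  also have "weq S E \<dots> d"
    using snoc by simp
  finally show ?case by simp
qed simp

lemma weq_rev_append_cancel: "u \<in> lists S \<Longrightarrow> weq S E (rev u @ u @ d) d"
  using weq_append_rev_cancel[of "rev u" S E d] by (simp add: in_lists_conv_set)

lemma weq_conjugate_twice: "s \<in> S \<Longrightarrow> weq S E (s # s # r @ [s, s]) r"
  using weq_cancel[of s S E "[]" "r @ [s, s]"] weq_cancel[of s S E r "[]"] weq_trans by fastforce

lemma weq_conjugate_iff:
  assumes "s \<in> S" shows "weq S E (s # r @ [s]) t \<longleftrightarrow> weq S E r (s # t @ [s])"
proof
  assume "weq S E (s # r @ [s]) t"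
  then have "weq S E (s # s # r @ [s, s]) (s # t @ [s])"
    using weq_in_context[of S E "s # r @ [s]" t "[s]" "[s]"] by simp
  then show "weq S E r (s # t @ [s])"
    using weq_conjugate_twice[OF assms] weq_sym weq_trans by blast
next
  assume "weq S E r (s # t @ [s])"
  then have "weq S E (s # r @ [s]) (s # s # t @ [s, s])"
    using weq_in_context[of S E r "s # t @ [s]" "[s]" "[s]"] by simp
  then show "weq S E (s # r @ [s]) t"
    using weq_conjugate_twice[OF assms] weq_trans by blast
qed


section \<open>Reflections and the strong exchange property\<close>

lemma reflection_simple: "s \<in> S \<Longrightarrow> reflection S [s]"
  unfolding reflection_def by (rule bexI[of _ "[]"]) auto

lemma reflection_rev: "reflection S t \<Longrightarrow> rev t = t"
  unfolding reflection_def by auto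

lemma reflection_lists: "reflection S t \<Longrightarrow> t \<in> lists S"
  unfolding reflection_def by auto

lemma reflection_conjugate: "reflection S t \<Longrightarrow> c \<in> lists S \<Longrightarrow> reflection S (c @ t @ rev c)"
  unfolding reflection_def by (auto intro!: bexI[of _ "c @ _"])

lemma weq_reflection_square: "reflection S t \<Longrightarrow> weq S E (t @ t @ w) w"
  using weq_append_rev_cancel[OF reflection_lists] reflection_rev by metis

text \<open>For a word \<open>w = s\<^sub>1 \<dots> s\<^sub>k\<close>, \<open>reflection_parity S E w t\<close> tells whether \<open>t\<close> equals
  \<open>s\<^sub>1 \<dots> s\<^sub>i \<dots> s\<^sub>1\<close> for an odd number of indices \<open>i\<close>.\<close>

fun reflection_parity :: "'a set \<Rightarrow> ('a \<Rightarrow> 'a \<Rightarrow> bool) \<Rightarrow> 'a list \<Rightarrow> 'a list \<Rightarrow> bool" where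
  "reflection_parity S E [] t = False"
| "reflection_parity S E (s # w) t = (weq S E [s] t \<noteq> reflection_parity S E w (s # t @ [s]))"

lemma parity_weq_right: "weq S E t t' \<Longrightarrow> reflection_parity S E w t = reflection_parity S E w t'"
proof (induction w arbitrary: t t')
  case (Cons s w)
  have "weq S E (s # t @ [s]) (s # t' @ [s])"
    using weq_in_context[OF Cons.prems, of "[s]" "[s]"] by simp
  with Cons show ?case
    using weq_sym weq_trans by (metis reflection_parity.simps(2))
qed simp

lemma parity_append:
  "reflection_parity S E (u @ v) t =
     (reflection_parity S E u t \<noteq> reflection_parity S E v (rev u @ t @ u))"
  by (induction u arbitrary: t) auto

lemma parity_replace_factor:
  assumes "weq S E m m'" and "\<And>x. reflection_parity S E m x = reflection_parity S E m' x"
  shows "reflection_parity S E (a @ m @ b) t = reflection_parity S E (a @ m' @ b) t"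
proof -
  let ?x = "rev a @ t @ a"
  have "weq S E (rev m @ ?x @ m) (rev m' @ ?x @ m')"
    using weq_append[OF weq_rev[OF assms(1)] weq_append[OF weq_refl assms(1)]] .
  then have "reflection_parity S E b (rev m @ ?x @ m) = reflection_parity S E b (rev m' @ ?x @ m')"
    by (rule parity_weq_right)
  then show ?thesis
    using assms(2) by (simp add: parity_append)
qed

lemma weq_singleton_conjugate_iff:
  assumes "s \<in> S" and "weq S E [s, r, s] [r]"
  shows "weq S E [r] (s # x @ [s]) \<longleftrightarrow> weq S E [r] x"
proof -
  have "weq S E [r] (s # x @ [s]) \<longleftrightarrow> weq S E [s, r, s] x"
    using weq_conjugate_iff[OF assms(1), of E "[r]" x] by simp
  also have "\<dots> \<longleftrightarrow> weq S E [r] x"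
    using assms(2) weq_sym weq_trans by blast
  finally show ?thesis .
qed

lemma parity_square: "s \<in> S \<Longrightarrow> \<not> reflection_parity S E [s, s] x"
  using weq_singleton_conjugate_iff[of s S E s x] weq_cancel[of s S E "[]" "[s]"] by simp

lemma parity_commute:
  assumes "s \<in> S" "r \<in> S" "E s r"
  shows "reflection_parity S E [s, r] x = reflection_parity S E [r, s] x"
proof -
  have "weq S E [s, r, s] [r]"
    using weq_commute[of s S r E "[]" "[s]"] assms weq_cancel[OF assms(1), of E "[r]" "[]"]
      weq_trans
    by fastforce
  moreover have "weq S E [r, s, r] [s]"
    using weq_commute[of s S r E "[r]" "[]"] assms weq_cancel[OF assms(2), of E "[]" "[s]"]
      weq_sym weq_trans
    by fastforce
  ultimately show ?thesis
    using weq_singleton_conjugate_iff[OF assms(1)] weq_singleton_conjugate_iff[OF assms(2)] by auto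
qed

lemma parity_rel_step: "rel_step S E u v \<Longrightarrow> reflection_parity S E u t = reflection_parity S E v t"
  unfolding rel_step_def
proof (elim disjE exE conjE)
  fix a b s assume s: "s \<in> S" and "u = a @ [s, s] @ b" "v = a @ b"
  moreover have "weq S E [s, s] []"
    using weq_cancel[OF s, of E "[]" "[]"] by simp
  ultimately show ?thesis
    using parity_replace_factor[of S E "[s, s]" "[]" a b t] parity_square[OF s] by simp
next
  fix a b s r assume sr: "s \<in> S" "r \<in> S" "E s r" and "u = a @ [s, r] @ b" "v = a @ [r, s] @ b"
  moreover have "weq S E [s, r] [r, s]"
    using weq_commute[of s S r E "[]" "[]"] sr by simp
  ultimately show ?thesis
    using parity_replace_factor[of S E "[s, r]" "[r, s]" a b t] parity_commute[of s S r E] by simp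
qed

lemma parity_weq: "weq S E u v \<Longrightarrow> reflection_parity S E u t = reflection_parity S E v t"
  unfolding weq_def by (induction rule: equivclp_induct) (use parity_rel_step in metis)+

lemma parity_reflection_self:
  assumes "reflection S t" shows "reflection_parity S E t t"
proof -
  obtain a s where a: "a \<in> lists S" and s: "s \<in> S" and t: "t = a @ [s] @ rev a"
    using assms unfolding reflection_def by blast
  let ?x = "rev a @ t @ a"
  have "weq S E ?x (rev a @ a @ [s] @ rev a @ a)"
    using t by simp
  also have "weq S E \<dots> [s]"
    using weq_rev_append_cancel[OF a, of E "[s] @ rev a @ a"] weq_rev_append_cancel[OF a, of E "[]"]
      weq_append[OF weq_refl, of S E "rev a @ a" "[]" "[s]"] weq_trans
    by fastforce
  finally have x: "weq S E ?x [s]" .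
  have "weq S E (s # ?x @ [s]) [s, s, s]"
    using weq_in_context[OF x, of "[s]" "[s]"] by simp
  also have "weq S E \<dots> [s]"
    using weq_cancel[OF s, of E "[]" "[s]"] by simp
  finally have sxs: "weq S E (s # ?x @ [s]) [s]" .
  have "\<not> reflection_parity S E (a @ rev a) t"
    using parity_weq[OF weq_append_rev_cancel[OF a, of E "[]"], of t] by simp
  then have "reflection_parity S E a t = reflection_parity S E (rev a) [s]"
    using parity_weq_right[OF x, of "rev a"] by (simp add: parity_append)
  moreover have "reflection_parity S E ([s] @ rev a) ?x = (\<not> reflection_parity S E (rev a) [s])"
    using parity_weq_right[OF sxs, of "rev a"] weq_sym[OF x] by simp
  ultimately have "reflection_parity S E (a @ [s] @ rev a) t"
    by (simp only: parity_append) simp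
  then show ?thesis
    by (metis t)
qed

lemma parity_split:
  "w \<in> lists S \<Longrightarrow> reflection_parity S E w t \<Longrightarrow>
     \<exists>a s b. w = a @ [s] @ b \<and> weq S E t (a @ [s] @ rev a)"
proof (induction w arbitrary: t)
  case (Cons s w)
  show ?case
  proof (cases "weq S E [s] t")
    case True
    then have "s # w = [] @ [s] @ w \<and> weq S E t ([] @ [s] @ rev [])"
      using weq_sym by simp
    then show ?thesis
      by blast
  next
    case False
    then have "w \<in> lists S" and "reflection_parity S E w (s # t @ [s])"
      using Cons.prems by auto
    then obtain a r b where "w = a @ [r] @ b" "weq S E (s # t @ [s]) (a @ [r] @ rev a)"
      using Cons.IH by blast
    then have "s # w = (s # a) @ [r] @ b \<and> weq S E t ((s # a) @ [r] @ rev (s # a))"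
      using weq_conjugate_iff[of s S E t "a @ [r] @ rev a"] Cons.prems by simp
    then show ?thesis
      by blast
  qed
qed simp

lemma parity_delete:
  assumes "w \<in> lists S" and "reflection_parity S E w t"
  obtains a s b where "w = a @ [s] @ b" and "weq S E (t @ w) (a @ b)"
proof -
  obtain a s b where w: "w = a @ [s] @ b" and t: "weq S E t (a @ [s] @ rev a)"
    using parity_split[OF assms] by blast
  have a: "a \<in> lists S" and s: "s \<in> S"
    using assms(1) w by auto
  have "weq S E (t @ w) ((a @ [s] @ rev a) @ a @ [s] @ b)"
    using weq_append[OF t weq_refl] w by simp
  also have "weq S E \<dots> (a @ [s] @ [s] @ b)"
    using weq_in_context[OF weq_rev_append_cancel[OF a, of E "[s] @ b"], of "a @ [s]" "[]"] by simp
  also have "weq S E \<dots> (a @ b)"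
    using weq_cancel[OF s] by simp
  finally show thesis
    using that w by blast
qed

lemma len_le: "u \<in> lists S \<Longrightarrow> weq S E u w \<Longrightarrow> len S E w \<le> length u"
  unfolding len_def by (intro Least_le bexI[of _ u]) auto

lemma obtain_reduced_word:
  assumes "w \<in> lists S"
  obtains u where "u \<in> lists S" and "weq S E u w" and "length u = len S E w"
proof -
  have "\<exists>n. \<exists>u\<in>lists S. weq S E u w \<and> length u = n"
    using assms weq_refl by blast
  then have "\<exists>u\<in>lists S. weq S E u w \<and> length u = len S E w"
    unfolding len_def by (rule LeastI_ex)
  then show thesis
    using that by blast
qed

lemma len_weq: "weq S E w w' \<Longrightarrow> len S E w = len S E w'"
proof -
  assume "weq S E w w'"
  then have "weq S E u w \<longleftrightarrow> weq S E u w'" for u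
    using weq_sym weq_trans by blast
  then show ?thesis
    unfolding len_def by simp
qed

lemma len_reflection_less:
  assumes "w \<in> lists S" and "reflection_parity S E w t"
  shows "len S E (t @ w) < len S E w"
proof -
  obtain u where u: "u \<in> lists S" "weq S E u w" "length u = len S E w"
    using obtain_reduced_word[OF assms(1)] .
  have "reflection_parity S E u t"
    using assms(2) parity_weq[OF u(2)] by simp
  then obtain a s b where ab: "u = a @ [s] @ b" "weq S E (t @ u) (a @ b)"
    using parity_delete[OF u(1)] by blast
  have "a @ b \<in> lists S"
    using u(1) ab(1) by simp
  moreover have "weq S E (a @ b) (t @ w)"
    using weq_trans[OF weq_sym[OF ab(2)] weq_append[OF weq_refl u(2)]] .
  ultimately have "len S E (t @ w) \<le> length (a @ b)"
    by (rule len_le)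
  then show ?thesis
    using u(3) ab(1) by simp
qed

lemma len_reflection_greater:
  assumes w: "w \<in> lists S" and t: "reflection S t" and "\<not> reflection_parity S E w t"
  shows "len S E w < len S E (t @ w)"
proof -
  have "weq S E (rev t @ t @ t) t"
    using weq_reflection_square[OF t] reflection_rev[OF t] by simp
  then have "reflection_parity S E (t @ w) t"
    using parity_reflection_self[OF t] parity_weq_right[of S E "rev t @ t @ t" t w] assms(3)
    by (simp add: parity_append)
  moreover have "t @ w \<in> lists S"
    using reflection_lists[OF t] w by simp
  ultimately have "len S E (t @ t @ w) < len S E (t @ w)"
    by (rule len_reflection_less[rotated])
  then show ?thesis
    using len_weq[OF weq_reflection_square[OF t]] by simp
qed

lemma len_Cons_neq:
  assumes s: "s \<in> S" and w: "w \<in> lists S" shows "len S E (s # w) \<noteq> len S E w"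
proof (cases "reflection_parity S E w [s]")
  case True
  then show ?thesis
    using len_reflection_less[OF w True] by simp
next
  case False
  then show ?thesis
    using len_reflection_greater[OF w reflection_simple[OF s] False] by simp
qed

lemma strong_exchange:
  assumes w: "w \<in> lists S" and t: "reflection S t" and shorter: "len S E (t @ w) < len S E w"
  obtains a s b where "w = a @ [s] @ b" and "weq S E (t @ w) (a @ b)"
proof -
  have "reflection_parity S E w t"
    using len_reflection_greater[OF w t] shorter less_asym by blast
  then show thesis
    using parity_delete[OF w] that by blast
qed

lemma reflection_shortening_Cons:
  assumes s: "s \<in> S" and w: "w \<in> lists S" and t: "reflection S t"
    and shorter: "len S E (t @ w) < len S E w"
  shows "weq S E (t @ w) (s # w) \<or> len S E (s # t @ w) < len S E (s # w)"
proof -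
  have "s # w \<in> lists S"
    using s w by simp
  then obtain r where r: "r \<in> lists S" "weq S E r (s # w)" "length r = len S E (s # w)"
    by (rule obtain_reduced_word)
  have "weq S E (s # r) (s # s # w)"
    using weq_Cons[OF r(2)] .
  then have sr: "weq S E (s # r) w"
    using weq_trans[OF _ weq_Cons_Cons_cancel[OF s]] by blast
  have tsr: "weq S E (t @ s # r) (t @ w)"
    using weq_append[OF weq_refl sr] .
  have "s # r \<in> lists S"
    using s r(1) by simp
  moreover have "len S E (t @ s # r) < len S E (s # r)"
    using shorter len_weq[OF sr] len_weq[OF tsr] by simp
  ultimately obtain a s' b where ab: "s # r = a @ [s'] @ b" "weq S E (t @ s # r) (a @ b)"
    using strong_exchange[OF _ t] by blast
  then have tw: "weq S E (t @ w) (a @ b)"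
    using weq_trans[OF weq_sym[OF tsr]] by blast
  show ?thesis
  proof (cases a)
    case Nil
    then have "b = r"
      using ab(1) by simp
    then show ?thesis
      using weq_trans[OF tw] r(2) Nil by simp
  next
    case (Cons c a')
    then have r': "r = a' @ [s'] @ b" and "c = s"
      using ab(1) by auto
    then have "weq S E (s # t @ w) (s # s # a' @ b)"
      using weq_Cons[OF tw] Cons by simp
    then have "weq S E (a' @ b) (s # t @ w)"
      using weq_trans[OF _ weq_Cons_Cons_cancel[OF s]] weq_sym by blast
    moreover have "a' @ b \<in> lists S"
      using r(1) r' by simp
    ultimately have "len S E (s # t @ w) \<le> length (a' @ b)"
      by (rule len_le[rotated])
    then show ?thesis
      using r(3) r' by simp
  qed
qed

section \<open>Bruhat order and the lifting property\<close>

lemma bruhat_step_iff_left: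
  "bruhat_step S E x y \<longleftrightarrow> x \<in> lists S \<and> y \<in> lists S \<and>
     (\<exists>t. reflection S t \<and> weq S E (t @ x) y) \<and> len S E x < len S E y"
proof -
  have "\<exists>t. reflection S t \<and> weq S E (t @ x) y"
    if x: "x \<in> lists S" and t: "reflection S t" "weq S E (x @ t) y" for t
  proof (intro exI conjI)
    show "reflection S (x @ t @ rev x)"
      using reflection_conjugate[OF t(1) x] .
    have "weq S E ((x @ t) @ rev x @ x @ []) ((x @ t) @ [])"
      using weq_in_context[OF weq_rev_append_cancel[OF x, of E "[]"], of "x @ t" "[]"] by simp
    then show "weq S E ((x @ t @ rev x) @ x) y"
      using weq_trans[OF _ t(2)] by simp
  qed
  moreover have "\<exists>t. reflection S t \<and> weq S E (x @ t) y"
    if x: "x \<in> lists S" and t: "reflection S t" "weq S E (t @ x) y" for t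
  proof (intro exI conjI)
    show "reflection S (rev x @ t @ rev (rev x))"
      using reflection_conjugate[OF t(1), of "rev x"] x by (simp add: in_lists_conv_set)
    show "weq S E (x @ rev x @ t @ rev (rev x)) y"
      using weq_trans[OF weq_append_rev_cancel[OF x] t(2)] by simp
  qed
  ultimately show ?thesis
    unfolding bruhat_step_def by blast
qed

lemma bruhat_stepI:
  "x \<in> lists S \<Longrightarrow> y \<in> lists S \<Longrightarrow> reflection S t \<Longrightarrow> weq S E (t @ x) y \<Longrightarrow>
     len S E x < len S E y \<Longrightarrow> bruhat_step S E x y"
  unfolding bruhat_step_iff_left by blast

lemma bruhat_step_weq:
  assumes "bruhat_step S E x y" and "weq S E x x'" and "weq S E y y'"
  shows "bruhat_step S E x' y'"
proof -
  obtain t where x: "x \<in> lists S" and y: "y \<in> lists S" and t: "reflection S t"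
    and txy: "weq S E (t @ x) y" and less: "len S E x < len S E y"
    using assms(1) unfolding bruhat_step_iff_left by blast
  have "x' \<in> lists S" and "y' \<in> lists S"
    using weq_lists[OF assms(2) x] weq_lists[OF assms(3) y] .
  moreover have "weq S E (t @ x') y'"
    using weq_trans[OF weq_trans[OF weq_append[OF weq_refl weq_sym[OF assms(2)]] txy] assms(3)] .
  moreover have "len S E x' < len S E y'"
    using less len_weq[OF assms(2)] len_weq[OF assms(3)] by simp
  ultimately show ?thesis
    by (intro bruhat_stepI[OF _ _ t])
qed

lemma bruhat_steps_weq:
  assumes "(bruhat_step S E)\<^sup>+\<^sup>+ x y" and "weq S E x x'" and "weq S E y y'"
  shows "(bruhat_step S E)\<^sup>+\<^sup>+ x' y'"
  using assms(1,3)
proof (induction arbitrary: y' rule: tranclp_induct)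
  case (base y)
  show ?case
    using tranclp.r_into_trancl[of "bruhat_step S E",
        OF bruhat_step_weq[OF base.hyps assms(2) base.prems]] .
next
  case (step y z)
  show ?case
    using tranclp.trancl_into_trancl[of "bruhat_step S E", OF step.IH[OF weq_refl]
        bruhat_step_weq[OF step.hyps(2) weq_refl step.prems]] .
qed

lemma bruhat_le_trans:
  assumes "bruhat_le S E x y" and "bruhat_le S E y z" shows "bruhat_le S E x z"
proof -
  let ?steps = "(bruhat_step S E)\<^sup>+\<^sup>+"
  consider (weq_weq) "weq S E x y" "weq S E y z" | (weq_steps) "weq S E x y" "?steps y z"
    | (steps_weq) "?steps x y" "weq S E y z" | (steps_steps) "?steps x y" "?steps y z"
    using assms unfolding bruhat_le_def by blast
  then show ?thesis
  proof cases
    case weq_weq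
    then show ?thesis
      unfolding bruhat_le_def using weq_trans by blast
  next
    case weq_steps
    then show ?thesis
      unfolding bruhat_le_def using bruhat_steps_weq[OF _ weq_sym weq_refl] by blast
  next
    case steps_weq
    then show ?thesis
      unfolding bruhat_le_def using bruhat_steps_weq[OF _ weq_refl] by blast
  next
    case steps_steps
    then show ?thesis
      unfolding bruhat_le_def using tranclp_trans by metis
  qed
qed

lemma bruhat_le_step: "bruhat_step S E x y \<Longrightarrow> bruhat_le S E x y"
  unfolding bruhat_le_def by auto

lemma bruhat_le_weq: "weq S E x y \<Longrightarrow> bruhat_le S E x y"
  unfolding bruhat_le_def by auto

lemma bruhat_step_Cons:
  "s \<in> S \<Longrightarrow> w \<in> lists S \<Longrightarrow> len S E w < len S E (s # w) \<Longrightarrow> bruhat_step S E w (s # w)"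
  using bruhat_stepI[of w S "s # w" "[s]"] reflection_simple by fastforce

lemma bruhat_step_Cons_descent:
  "s \<in> S \<Longrightarrow> w \<in> lists S \<Longrightarrow> len S E (s # w) < len S E w \<Longrightarrow> bruhat_step S E (s # w) w"
  using bruhat_stepI[of "s # w" S w "[s]"] reflection_simple weq_Cons_Cons_cancel by fastforce

lemma bruhat_step_lift:
  assumes step: "bruhat_step S E w w'" and s: "s \<in> S"
  shows "bruhat_le S E (s # w) w' \<or> bruhat_le S E (s # w) (s # w')"
proof -
  obtain t where w: "w \<in> lists S" and w': "w' \<in> lists S" and t: "reflection S t"
    and tw: "weq S E (t @ w) w'" and less: "len S E w < len S E w'"
    using step unfolding bruhat_step_iff_left by blast
  show ?thesis
  proof (cases "len S E (s # w) < len S E (s # w')")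
    case True
    have "weq S E ((s # t) @ [s, s] @ w) ((s # t) @ w)"
      by (rule weq_cancel[OF s])
    also have "weq S E \<dots> (s # w')"
      using weq_Cons[OF tw] by simp
    finally have conj: "weq S E (([s] @ t @ rev [s]) @ s # w) (s # w')"
      by simp
    have refl: "reflection S ([s] @ t @ rev [s])"
      using reflection_conjugate[OF t, of "[s]"] s by simp
    have "s # w \<in> lists S" and "s # w' \<in> lists S"
      using s w w' by simp_all
    then have "bruhat_step S E (s # w) (s # w')"
      using bruhat_stepI[OF _ _ refl conj True] by blast
    then show ?thesis
      by (simp add: bruhat_le_step)
  next
    case False
    have tw': "weq S E (t @ w') w"
      using weq_trans[OF weq_append[OF weq_refl weq_sym[OF tw]] weq_reflection_square[OF t]] .
    then have "len S E (t @ w') < len S E w'"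
      using less len_weq[OF tw'] by simp
    then have "weq S E (t @ w') (s # w') \<or> len S E (s # t @ w') < len S E (s # w')"
      by (rule reflection_shortening_Cons[OF s w' t])
    then have "weq S E (t @ w') (s # w')"
      using False len_weq[OF weq_Cons[OF tw']] by auto
    then have "weq S E (s # w) (s # s # w')"
      using weq_Cons[OF weq_trans[OF weq_sym[OF tw']]] by blast
    then have "weq S E (s # w) w'"
      using weq_trans[OF _ weq_Cons_Cons_cancel[OF s]] by blast
    then show ?thesis
      by (simp add: bruhat_le_weq)
  qed
qed

lemma bruhat_le_lift:
  assumes le: "bruhat_le S E x y" and s: "s \<in> S"
  shows "bruhat_le S E (s # x) y \<or> bruhat_le S E (s # x) (s # y)"
proof (cases "weq S E x y")
  case True
  then show ?thesis
    using bruhat_le_weq[OF weq_Cons[OF True]] by blast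
next
  case False
  then have "(bruhat_step S E)\<^sup>+\<^sup>+ x y"
    using le unfolding bruhat_le_def by blast
  then show ?thesis
  proof (induction rule: tranclp_induct)
    case (base y)
    then show ?case
      using bruhat_step_lift[OF _ s] by blast
  next
    case (step y z)
    from step.IH show ?case
    proof
      assume "bruhat_le S E (s # x) y"
      then show ?case
        using bruhat_le_trans[OF _ bruhat_le_step[OF step.hyps(2)]] by blast
    next
      assume "bruhat_le S E (s # x) (s # y)"
      then show ?case
        using bruhat_step_lift[OF step.hyps(2) s] bruhat_le_trans[of S E "s # x" "s # y"] by blast
    qed
  qed
qed

lemma bruhat_le_Cons_descent:
  assumes "bruhat_le S E x y" and "s \<in> S" and "y \<in> lists S" and "s \<in> left_descents S E y"
  shows "bruhat_le S E (s # x) y"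
proof -
  have "len S E (s # y) < len S E y"
    using assms(4) unfolding left_descents_def by simp
  then have "bruhat_le S E (s # y) y"
    by (rule bruhat_le_step[OF bruhat_step_Cons_descent[OF assms(2,3)]])
  then show ?thesis
    using bruhat_le_lift[OF assms(1,2)] bruhat_le_trans[of S E "s # x" "s # y" y] by blast
qed

lemma left_descent_of_two_covers:
  assumes cover1: "bruhat_cover S E x y1" and cover2: "bruhat_cover S E x y2"
    and ne: "\<not> weq S E y1 y2"
    and lists: "x \<in> lists S" "y1 \<in> lists S" "y2 \<in> lists S"
    and q: "q \<in> left_descents S E y1 \<inter> left_descents S E y2"
  shows "q \<in> left_descents S E x"
proof (rule ccontr)
  assume not_descent: "q \<notin> left_descents S E x"
  have qS: "q \<in> S"
    using q unfolding left_descents_def by blast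
  have longer: "len S E x < len S E (q # x)"
    using not_descent len_Cons_neq[OF qS lists(1), of E] qS unfolding left_descents_def by auto
  then have "bruhat_le S E x (q # x)"
    using bruhat_le_step[OF bruhat_step_Cons[OF qS lists(1)]] by blast
  moreover have "\<not> weq S E x (q # x)"
    using longer len_weq[of S E x "q # x"] by auto
  ultimately have less: "bruhat_less S E x (q # x)"
    unfolding bruhat_less_def by blast
  have covered_by_qx: "weq S E (q # x) y"
    if cover: "bruhat_cover S E x y" and y: "y \<in> lists S" "q \<in> left_descents S E y" for y
  proof -
    have "bruhat_le S E x y"
      using cover unfolding bruhat_cover_def bruhat_less_def by simp
    then have "bruhat_le S E (q # x) y"
      by (rule bruhat_le_Cons_descent[OF _ qS y])
    moreover have "q # x \<in> lists S"
      using qS lists(1) by simp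
    ultimately show ?thesis
      using cover less unfolding bruhat_cover_def bruhat_less_def by blast
  qed
  have "weq S E (q # x) y1" and "weq S E (q # x) y2"
    using covered_by_qx[OF cover1 lists(2)] covered_by_qx[OF cover2 lists(3)] q by simp_all
  then show False
    using ne weq_trans[OF weq_sym] by blast
qed

theorem lemma7p8:
  fixes S :: "'a set" and E :: "'a \<Rightarrow> 'a \<Rightarrow> bool"
    and x1 x2 y1 y2 :: "'a list" and q :: 'a
  assumes "right_angled S E"
    and "butterfly S E x1 x2 y1 y2"
    and "q \<in> left_descents S E y1 \<inter> left_descents S E y2"
  shows "q \<in> left_descents S E x1 \<inter> left_descents S E x2"
  using left_descent_of_two_covers[OF _ _ _ _ _ _ assms(3)] assms(2)
  unfolding butterfly_def by blast

end
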